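(* Let $G$ be a map graph with a corresponding planar bipartite graph $B$ and let $k$ be a positive integer. Let $\mathcal{C}\in\mathscr{S}$ and write $\mathcal{C}=\mathcal{C}_1\uplus\mathcal{C}_2$, where a cycle belongs to $\mathcal{C}_1$ if and only if it is a triangle contained in a special clique of $G$. Let $K_1$ and $K_2$ be special cliques of $G$. Then there do not exist two distinct vertices $u,v\in V(\mathcal{C}_2)\cap K_1\cap K_2$ and four edges $e_1,e_2,e_3,e_4$ such that (a) $e_1,e_2\in E(\mathcal{C}_2)\cap E(K_1)$, (b) $e_3,e_4\in E(\mathcal{C}_2)\cap E(K_2)$, (c) $u$ is incident with $e_1$ and $e_3$, and (d) $v$ is incident with $e_2$ and $e_4$.
   Context: All graphs are finite and simple. For a set $\mathcal{C}_2$ of cycles, $V(\mathcal{C}_2)$ and $E(\mathcal{C}_2)$ denote the union of their vertex sets and edge sets; $E(K)$ denotes the set of edges with both endpoints in $K$. For a bipartite graph $B$ with bipartition $V(B)=W\uplus U$, the half-square of $B$ is the graph on $W$ in which two vertices are adjacent iff they are at distance exactly $2$ in $B$. A graph $G$ is a map graph iff it is the half-square of some planar bipartite graph $B$; such $B$ (with $W=V(G)$) is a corresponding planar bipartite graph; for each $s\in U$, $N_B(s)$ is a clique of $G$ called a special clique. A solution is a set of $k$ pairwise vertex-disjoint cycles of $G$. $\mathscr{S}$ denotes the set of solutions consisting only of induced cycles of $G$ that, among all such solutions, have the maximum number of members that are triangles contained in a special clique. *)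

theory Defs
  imports "HOL-Analysis.Analysis"
begin

definition simple_graph :: "'a set \<Rightarrow> 'a set set \<Rightarrow> bool" where
  "simple_graph V E \<longleftrightarrow> finite V \<and> (\<forall>e\<in>E. e \<subseteq> V \<and> card e = 2)"

definition planar_graph :: "'a set \<Rightarrow> 'a set set \<Rightarrow> bool" where
  "planar_graph V E \<longleftrightarrow>
     (\<exists>(f :: 'a \<Rightarrow> complex) (\<gamma> :: 'a set \<Rightarrow> real \<Rightarrow> complex).
        inj_on f V \<and>
        (\<forall>e\<in>E. arc (\<gamma> e) \<and> {pathstart (\<gamma> e), pathfinish (\<gamma> e)} = f ` e) \<and>
        (\<forall>e\<in>E. \<forall>v\<in>V. f v \<in> path_image (\<gamma> e) \<longrightarrow> v \<in> e) \<and>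
        (\<forall>e\<in>E. \<forall>e'\<in>E. e \<noteq> e' \<longrightarrow>
            path_image (\<gamma> e) \<inter> path_image (\<gamma> e') = f ` (e \<inter> e')))"

definition bipartite_with :: "'a set \<Rightarrow> 'a set set \<Rightarrow> 'a set \<Rightarrow> 'a set \<Rightarrow> bool" where
  "bipartite_with VB EB W U \<longleftrightarrow> VB = W \<union> U \<and> W \<inter> U = {} \<and>
     (\<forall>e\<in>EB. card (e \<inter> W) = 1 \<and> card (e \<inter> U) = 1)"

definition nbhd :: "'a set set \<Rightarrow> 'a \<Rightarrow> 'a set" where
  "nbhd E x = {y. {x, y} \<in> E}"

definition dist_two :: "'a set set \<Rightarrow> 'a \<Rightarrow> 'a \<Rightarrow> bool" where
  "dist_two E x y \<longleftrightarrow> x \<noteq> y \<and> {x, y} \<notin> E \<and> (\<exists>z. {x, z} \<in> E \<and> {z, y} \<in> E)"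

definition half_square_edges :: "'a set set \<Rightarrow> 'a set \<Rightarrow> 'a set set" where
  "half_square_edges EB W = {{x, y} | x y. x \<in> W \<and> y \<in> W \<and> dist_two EB x y}"

definition corresponding_planar_bipartite ::
  "'a set \<Rightarrow> 'a set set \<Rightarrow> 'a set \<Rightarrow> 'a set set \<Rightarrow> 'a set \<Rightarrow> bool" where
  "corresponding_planar_bipartite V E VB EB U \<longleftrightarrow>
     simple_graph VB EB \<and> planar_graph VB EB \<and> bipartite_with VB EB V U \<and>
     E = half_square_edges EB V"

definition special_clique :: "'a set set \<Rightarrow> 'a set \<Rightarrow> 'a set \<Rightarrow> bool" where
  "special_clique EB U K \<longleftrightarrow> (\<exists>s\<in>U. K = nbhd EB s)"

definition is_cycle :: "'a set set \<Rightarrow> 'a set \<times> 'a set set \<Rightarrow> bool" where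
  "is_cycle E C \<longleftrightarrow> (\<exists>xs. distinct xs \<and> length xs \<ge> 3 \<and> fst C = set xs \<and>
      snd C = {{xs ! i, xs ! (Suc i mod length xs)} | i. i < length xs} \<and> snd C \<subseteq> E)"

definition edges_in :: "'a set set \<Rightarrow> 'a set \<Rightarrow> 'a set set" where
  "edges_in E K = {e \<in> E. e \<subseteq> K}"

definition induced_cycle :: "'a set set \<Rightarrow> 'a set \<times> 'a set set \<Rightarrow> bool" where
  "induced_cycle E C \<longleftrightarrow> is_cycle E C \<and> edges_in E (fst C) = snd C"

definition special_triangle :: "'a set set \<Rightarrow> 'a set \<Rightarrow> 'a set \<times> 'a set set \<Rightarrow> bool" where
  "special_triangle EB U C \<longleftrightarrow> card (fst C) = 3 \<and> (\<exists>K. special_clique EB U K \<and> fst C \<subseteq> K)"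

definition solution :: "'a set set \<Rightarrow> nat \<Rightarrow> ('a set \<times> 'a set set) set \<Rightarrow> bool" where
  "solution E k \<C> \<longleftrightarrow> finite \<C> \<and> card \<C> = k \<and> (\<forall>C\<in>\<C>. is_cycle E C) \<and>
     (\<forall>C\<in>\<C>. \<forall>C'\<in>\<C>. C \<noteq> C' \<longrightarrow> fst C \<inter> fst C' = {})"

definition induced_solution :: "'a set set \<Rightarrow> nat \<Rightarrow> ('a set \<times> 'a set set) set \<Rightarrow> bool" where
  "induced_solution E k \<C> \<longleftrightarrow> solution E k \<C> \<and> (\<forall>C\<in>\<C>. induced_cycle E C)"

definition best_solutions ::
  "'a set set \<Rightarrow> 'a set set \<Rightarrow> 'a set \<Rightarrow> nat \<Rightarrow> ('a set \<times> 'a set set) set set" where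
  "best_solutions E EB U k = {\<C>. induced_solution E k \<C> \<and>
     (\<forall>\<C>'. induced_solution E k \<C>' \<longrightarrow>
        card {C\<in>\<C>'. special_triangle EB U C} \<le> card {C\<in>\<C>. special_triangle EB U C})}"

end

theory Submission
  imports Defs
begin

text \<open>Both edges at \<open>u\<close> lie on the same cycle \<open>D\<^sub>1\<close> of \<open>\<C>\<^sub>2\<close>, and both edges at \<open>v\<close> on the
  same cycle \<open>D\<^sub>2\<close>, since the cycles of a solution are vertex-disjoint. An induced cycle containing
  three vertices of a special clique is the triangle they span, so a cycle of \<open>\<C>\<^sub>2\<close> meets every
  special clique in at most two vertices. If \<open>D\<^sub>1 = D\<^sub>2\<close> this forces both neighbours of \<open>u\<close> to be
  \<open>v\<close>. Otherwise the neighbours \<open>a\<close> of \<open>u\<close> and \<open>c\<close> of \<open>v\<close> in \<open>K\<^sub>1\<close> span with \<open>u\<close> a triangle in \<open>K\<^sub>1\<close>,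
  the neighbours \<open>b\<close> of \<open>u\<close> and \<open>d\<close> of \<open>v\<close> in \<open>K\<^sub>2\<close> span with \<open>v\<close> a triangle in \<open>K\<^sub>2\<close>, and replacing
  \<open>D\<^sub>1, D\<^sub>2\<close> by these two disjoint triangles yields a solution with two more special triangles.\<close>

definition clique :: "'a set set \<Rightarrow> 'a set \<Rightarrow> bool" where
  "clique E K \<longleftrightarrow> (\<forall>x\<in>K. \<forall>y\<in>K. x \<noteq> y \<longrightarrow> {x, y} \<in> E)"

lemma is_cycle_edgeE:
  assumes "is_cycle E C" "e \<in> snd C"
  obtains x y where "e = {x, y}" "x \<noteq> y" "x \<in> fst C" "y \<in> fst C"
proof -
  obtain xs where xs: "distinct xs" "length xs \<ge> 3" "fst C = set xs"
    "snd C = {{xs ! i, xs ! (Suc i mod length xs)} | i. i < length xs}"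
    using assms(1) unfolding is_cycle_def by blast
  then obtain i where i: "i < length xs" "e = {xs ! i, xs ! (Suc i mod length xs)}"
    using assms(2) by auto
  have "Suc i mod length xs < length xs" "Suc i mod length xs \<noteq> i"
    using i(1) xs(2) by (auto simp: mod_Suc)
  then show ?thesis
    using that i xs(1,3) by (metis nth_eq_iff_index_eq nth_mem)
qed

lemma is_cycle_edge_endpoints:
  assumes "is_cycle E C" "{x, y} \<in> snd C"
  shows "x \<noteq> y" "x \<in> fst C" "y \<in> fst C"
  using is_cycle_edgeE[OF assms] by (metis doubleton_eq_iff)+

lemma is_cycle_finite_card:
  assumes "is_cycle E C"
  shows "finite (fst C)" "card (fst C) \<ge> 3"
  using assms distinct_card unfolding is_cycle_def by fastforce+

lemma cycle_edge_indices_adjacent: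
  assumes "distinct xs" "p < length xs" "q < length xs" "p \<noteq> q"
    and "{xs ! p, xs ! q} \<in> {{xs ! i, xs ! (Suc i mod length xs)} | i. i < length xs}"
  shows "Suc p mod length xs = q \<or> Suc q mod length xs = p"
proof -
  obtain i where i: "i < length xs" "{xs ! p, xs ! q} = {xs ! i, xs ! (Suc i mod length xs)}"
    using assms(5) by blast
  have "Suc i mod length xs < length xs" using i(1) by (intro mod_less_divisor) auto
  then show ?thesis
    using assms(1-4) i by (auto simp: doubleton_eq_iff nth_eq_iff_index_eq)
qed

lemma pairwise_cyclically_adjacent_residues:
  fixes p q r n :: nat
  assumes "p < n" "q < n" "r < n" "p \<noteq> q" "q \<noteq> r" "p \<noteq> r" "n \<ge> 3"
    and "Suc p mod n = q \<or> Suc q mod n = p" "Suc q mod n = r \<or> Suc r mod n = q"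
    and "Suc p mod n = r \<or> Suc r mod n = p"
  shows "n = 3"
  using assms by (auto simp: mod_Suc split: if_splits)

lemma is_cycle_triangle:
  assumes "is_cycle E C" "{x, y} \<in> snd C" "{y, z} \<in> snd C" "{x, z} \<in> snd C"
    and "x \<noteq> y" "y \<noteq> z" "x \<noteq> z"
  shows "fst C = {x, y, z}"
proof -
  obtain xs where xs: "distinct xs" "length xs \<ge> 3" "fst C = set xs"
    and edges: "snd C = {{xs ! i, xs ! (Suc i mod length xs)} | i. i < length xs}"
    using assms(1) unfolding is_cycle_def by blast
  have "x \<in> set xs" "y \<in> set xs" "z \<in> set xs"
    using is_cycle_edge_endpoints[OF assms(1)] assms(2,3) xs(3) by auto
  then obtain p q r where pqr: "p < length xs" "q < length xs" "r < length xs"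
    "x = xs ! p" "y = xs ! q" "z = xs ! r"
    by (metis in_set_conv_nth)
  with assms(5-7) have ne: "p \<noteq> q" "q \<noteq> r" "p \<noteq> r" by auto
  have adjacent: "Suc a mod length xs = b \<or> Suc b mod length xs = a"
    if "{xs ! a, xs ! b} \<in> snd C" "a < length xs" "b < length xs" "a \<noteq> b" for a b
    using cycle_edge_indices_adjacent[OF xs(1) that(2-4)] that(1) edges by blast
  have "length xs = 3"
    using pairwise_cyclically_adjacent_residues[OF pqr(1-3) ne xs(2)]
      adjacent[of p q] adjacent[of q r] adjacent[of p r] pqr ne assms(2-4) by blast
  then have "card (fst C) = 3"
    using xs by (simp add: distinct_card)
  moreover have "{x, y, z} \<subseteq> fst C"
    using \<open>x \<in> set xs\<close> \<open>y \<in> set xs\<close> \<open>z \<in> set xs\<close> xs(3) by auto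
  ultimately show ?thesis
    using assms(5-7) xs(3) by (metis card_3_iff card_subset_eq finite_set)
qed

lemma bipartite_common_neighbour_half_square_edge:
  assumes "bipartite_with VB EB W U" "s \<in> U" "{s, x} \<in> EB" "{s, y} \<in> EB" "x \<noteq> y"
  shows "{x, y} \<in> half_square_edges EB W"
proof -
  have side_W: "w \<in> W" if "{s, w} \<in> EB" for w
  proof (rule ccontr)
    assume "w \<notin> W"
    with assms(1,2) have "{s, w} \<inter> W = {}" unfolding bipartite_with_def by auto
    with assms(1) that show False unfolding bipartite_with_def by force
  qed
  have "{x, y} \<notin> EB"
  proof
    assume "{x, y} \<in> EB"
    then have "card ({x, y} \<inter> W) = 1" using assms(1) unfolding bipartite_with_def by auto
    with side_W assms(3-5) show False by (simp add: Int_absorb2)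
  qed
  with assms(3-5) have "dist_two EB x y"
    unfolding dist_two_def by (metis insert_commute)
  with side_W assms(3,4) show ?thesis
    unfolding half_square_edges_def by blast
qed

lemma special_clique_is_clique:
  assumes "corresponding_planar_bipartite V E VB EB U" "special_clique EB U K"
  shows "clique E K"
  using assms bipartite_common_neighbour_half_square_edge
  unfolding corresponding_planar_bipartite_def special_clique_def clique_def nbhd_def
  by fastforce

lemma induced_cycle_clique_triangle:
  assumes "induced_cycle E C" "clique E K"
    and "x \<in> fst C \<inter> K" "y \<in> fst C \<inter> K" "z \<in> fst C \<inter> K" "x \<noteq> y" "y \<noteq> z" "x \<noteq> z"
  shows "fst C = {x, y, z}"
proof -
  have "{x, y} \<in> snd C" "{y, z} \<in> snd C" "{x, z} \<in> snd C"
    using assms unfolding induced_cycle_def clique_def edges_in_def by auto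
  with assms(1,6-8) show ?thesis
    unfolding induced_cycle_def by (metis is_cycle_triangle)
qed

lemma nonspecial_induced_cycle_meets_special_clique:
  assumes "corresponding_planar_bipartite V E VB EB U" "special_clique EB U K"
    and "induced_cycle E C" "\<not> special_triangle EB U C"
    and "x \<in> fst C \<inter> K" "y \<in> fst C \<inter> K" "z \<in> fst C \<inter> K"
  shows "x = y \<or> y = z \<or> x = z"
proof (rule ccontr)
  assume "\<not> (x = y \<or> y = z \<or> x = z)"
  then have "fst C = {x, y, z}" "card {x, y, z} = 3"
    using induced_cycle_clique_triangle[OF assms(3) special_clique_is_clique[OF assms(1,2)]
        assms(5-7)]
    by auto
  with assms(2,4-7) show False
    unfolding special_triangle_def by auto
qed

definition triangle :: "'a \<Rightarrow> 'a \<Rightarrow> 'a \<Rightarrow> 'a set \<times> 'a set set" where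
  "triangle x y z = ({x, y, z}, {{x, y}, {y, z}, {x, z}})"

lemma triangle_induced_cycle:
  assumes "simple_graph V E" "{x, y} \<in> E" "{y, z} \<in> E" "{x, z} \<in> E"
    and "x \<noteq> y" "y \<noteq> z" "x \<noteq> z"
  shows "induced_cycle E (triangle x y z)"
proof -
  have "{..<length [x, y, z]} = {0, 1, 2}"
    by auto
  then have "{{[x, y, z] ! i, [x, y, z] ! (Suc i mod length [x, y, z])} | i. i < length [x, y, z]}
      = {{x, y}, {y, z}, {x, z}}"
    by (simp add: setcompr_eq_image flip: lessThan_def) (auto simp: insert_commute)
  then have "is_cycle E ({x, y, z}, {{x, y}, {y, z}, {x, z}})"
    unfolding is_cycle_def using assms(2-7) by (intro exI[of _ "[x, y, z]"]) auto
  moreover have "edges_in E {x, y, z} = {{x, y}, {y, z}, {x, z}}"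
  proof
    show "edges_in E {x, y, z} \<subseteq> {{x, y}, {y, z}, {x, z}}"
    proof
      fix e assume e: "e \<in> edges_in E {x, y, z}"
      then obtain p q where "e = {p, q}" "p \<noteq> q"
        using assms(1) unfolding simple_graph_def edges_in_def by (auto simp: card_2_iff)
      with e show "e \<in> {{x, y}, {y, z}, {x, z}}"
        unfolding edges_in_def by (auto simp: insert_commute)
    qed
  qed (use assms in \<open>auto simp: edges_in_def\<close>)
  ultimately show ?thesis
    unfolding induced_cycle_def triangle_def by simp
qed

lemma special_clique_triangle:
  assumes "simple_graph V E" "corresponding_planar_bipartite V E VB EB U" "special_clique EB U K"
    and "x \<in> K" "y \<in> K" "z \<in> K" "x \<noteq> y" "y \<noteq> z" "x \<noteq> z"
  shows "induced_cycle E (triangle x y z)" "special_triangle EB U (triangle x y z)"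
proof -
  have "clique E K"
    using special_clique_is_clique[OF assms(2,3)] .
  with assms(4-9) show "induced_cycle E (triangle x y z)"
    unfolding clique_def by (intro triangle_induced_cycle[OF assms(1)]) auto
  from assms(3-9) show "special_triangle EB U (triangle x y z)"
    unfolding special_triangle_def triangle_def by auto
qed

lemma induced_solution_exchange:
  assumes "induced_solution E k \<C>" "D\<^sub>1 \<in> \<C>" "D\<^sub>2 \<in> \<C>" "D\<^sub>1 \<noteq> D\<^sub>2"
    and "induced_cycle E T\<^sub>1" "induced_cycle E T\<^sub>2" "T\<^sub>1 \<notin> \<C>" "T\<^sub>2 \<notin> \<C>" "T\<^sub>1 \<noteq> T\<^sub>2"
    and "fst T\<^sub>1 \<inter> fst T\<^sub>2 = {}" "fst T\<^sub>1 \<union> fst T\<^sub>2 \<subseteq> fst D\<^sub>1 \<union> fst D\<^sub>2"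
  shows "induced_solution E k (\<C> - {D\<^sub>1, D\<^sub>2} \<union> {T\<^sub>1, T\<^sub>2})"
proof -
  have fin: "finite \<C>" and card: "card \<C> = k"
    and disj: "\<And>C C'. C \<in> \<C> \<Longrightarrow> C' \<in> \<C> \<Longrightarrow> C \<noteq> C' \<Longrightarrow> fst C \<inter> fst C' = {}"
    and ind: "\<And>C. C \<in> \<C> \<Longrightarrow> induced_cycle E C"
    using assms(1) unfolding induced_solution_def solution_def by auto
  have "card (\<C> - {D\<^sub>1, D\<^sub>2}) + 2 = k"
    using fin card assms(2-4) card_mono[OF fin, of "{D\<^sub>1, D\<^sub>2}"]
    by (simp add: card_Diff_subset)
  then have "card (\<C> - {D\<^sub>1, D\<^sub>2} \<union> {T\<^sub>1, T\<^sub>2}) = k"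
    using fin assms(7-9) by (subst card_Un_disjoint) auto
  moreover have "fst C \<inter> fst C' = {}"
    if "C \<in> \<C> - {D\<^sub>1, D\<^sub>2} \<union> {T\<^sub>1, T\<^sub>2}" "C' \<in> \<C> - {D\<^sub>1, D\<^sub>2} \<union> {T\<^sub>1, T\<^sub>2}" "C \<noteq> C'"
    for C C'
  proof -
    have "fst C \<inter> fst T = {}" if "C \<in> \<C> - {D\<^sub>1, D\<^sub>2}" "T \<in> {T\<^sub>1, T\<^sub>2}" for C T
      using disj[of C D\<^sub>1] disj[of C D\<^sub>2] that assms(2,3,11) by blast
    with that disj assms(10) show ?thesis
      by blast
  qed
  moreover have "induced_cycle E C" if "C \<in> \<C> - {D\<^sub>1, D\<^sub>2} \<union> {T\<^sub>1, T\<^sub>2}" for C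
    using that ind assms(5,6) by blast
  ultimately show ?thesis
    using fin unfolding induced_solution_def solution_def induced_cycle_def by blast
qed

lemma best_solution_no_special_triangle_exchange:
  assumes "\<C> \<in> best_solutions E EB U k" "D\<^sub>1 \<in> \<C>" "D\<^sub>2 \<in> \<C>" "D\<^sub>1 \<noteq> D\<^sub>2"
    and "\<not> special_triangle EB U D\<^sub>1" "\<not> special_triangle EB U D\<^sub>2"
    and "induced_cycle E T\<^sub>1" "induced_cycle E T\<^sub>2"
    and "special_triangle EB U T\<^sub>1" "special_triangle EB U T\<^sub>2"
    and "fst T\<^sub>1 \<inter> fst T\<^sub>2 = {}" "fst T\<^sub>1 \<union> fst T\<^sub>2 \<subseteq> fst D\<^sub>1 \<union> fst D\<^sub>2"
  shows False
proof -
  have sol: "induced_solution E k \<C>"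
    and best: "\<And>\<C>'. induced_solution E k \<C>' \<Longrightarrow>
        card {C\<in>\<C>'. special_triangle EB U C} \<le> card {C\<in>\<C>. special_triangle EB U C}"
    using assms(1) unfolding best_solutions_def by auto
  have fin: "finite \<C>"
    using sol unfolding induced_solution_def solution_def by simp
  have nonempty: "fst T \<noteq> {}" if "induced_cycle E T" for T
    using is_cycle_finite_card[of E T] that unfolding induced_cycle_def by auto
  have "T \<notin> \<C>" if "T \<in> {T\<^sub>1, T\<^sub>2}" for T
  proof
    assume "T \<in> \<C>"
    moreover have "T \<noteq> D\<^sub>1" "T \<noteq> D\<^sub>2"
      using that assms(5,6,9,10) by auto
    ultimately have "fst T \<inter> (fst D\<^sub>1 \<union> fst D\<^sub>2) = {}"
      using sol assms(2,3) unfolding induced_solution_def solution_def by blast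
    with that assms(7,8,12) nonempty show False by blast
  qed
  moreover have "T\<^sub>1 \<noteq> T\<^sub>2"
    using assms(11) nonempty[OF assms(7)] by auto
  ultimately have "induced_solution E k (\<C> - {D\<^sub>1, D\<^sub>2} \<union> {T\<^sub>1, T\<^sub>2})"
    using induced_solution_exchange[OF sol assms(2-4,7,8) _ _ _ assms(11,12)] by blast
  moreover have "{C \<in> \<C> - {D\<^sub>1, D\<^sub>2} \<union> {T\<^sub>1, T\<^sub>2}. special_triangle EB U C}
      = {C\<in>\<C>. special_triangle EB U C} \<union> {T\<^sub>1, T\<^sub>2}"
    using assms(5,6,9,10) by auto
  ultimately show False
    using best[of "\<C> - {D\<^sub>1, D\<^sub>2} \<union> {T\<^sub>1, T\<^sub>2}"] fin \<open>T\<^sub>1 \<noteq> T\<^sub>2\<close>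
      \<open>\<And>T. T \<in> {T\<^sub>1, T\<^sub>2} \<Longrightarrow> T \<notin> \<C>\<close>
    by (simp add: card_Un_disjoint)
qed

lemma best_solution_no_two_edges_in_two_cliques:
  assumes "simple_graph V E" "corresponding_planar_bipartite V E VB EB U"
    and "\<C> \<in> best_solutions E EB U k" "special_clique EB U K\<^sub>1" "special_clique EB U K\<^sub>2"
    and "D\<^sub>1 \<in> \<C>" "D\<^sub>2 \<in> \<C>" "\<not> special_triangle EB U D\<^sub>1" "\<not> special_triangle EB U D\<^sub>2"
    and "u \<noteq> v" "u \<in> K\<^sub>1 \<inter> K\<^sub>2" "v \<in> K\<^sub>1 \<inter> K\<^sub>2"
    and "{u, a} \<in> snd D\<^sub>1" "{u, b} \<in> snd D\<^sub>1" "{v, c} \<in> snd D\<^sub>2" "{v, d} \<in> snd D\<^sub>2"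
    and "a \<in> K\<^sub>1" "c \<in> K\<^sub>1" "b \<in> K\<^sub>2" "d \<in> K\<^sub>2" "a \<noteq> b" "c \<noteq> d"
  shows False
proof -
  have sol: "induced_solution E k \<C>"
    using assms(3) unfolding best_solutions_def by simp
  then have ind: "induced_cycle E D\<^sub>1" "induced_cycle E D\<^sub>2"
    using assms(6,7) unfolding induced_solution_def by auto
  have edge_mem: "x \<noteq> y \<and> x \<in> fst D \<and> y \<in> fst D" if "induced_cycle E D" "{x, y} \<in> snd D"
    for D x y
    using that is_cycle_edge_endpoints[of E D x y] unfolding induced_cycle_def by simp
  note in_D\<^sub>1 = edge_mem[OF ind(1) assms(13)] edge_mem[OF ind(1) assms(14)]
  note in_D\<^sub>2 = edge_mem[OF ind(2) assms(15)] edge_mem[OF ind(2) assms(16)]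
  note at_most_two = nonspecial_induced_cycle_meets_special_clique[OF assms(2)]
  show False
  proof (cases "D\<^sub>1 = D\<^sub>2")
    case True
    then have "a = v" "b = v"
      using at_most_two[OF assms(4) ind(1) assms(8), of u a v]
        at_most_two[OF assms(5) ind(1) assms(8), of u b v] in_D\<^sub>1 in_D\<^sub>2 assms(10-12,17,19)
      by auto
    with assms(21) show False by simp
  next
    case False
    then have "fst D\<^sub>1 \<inter> fst D\<^sub>2 = {}"
      using sol assms(6,7) unfolding induced_solution_def solution_def by blast
    with in_D\<^sub>1 in_D\<^sub>2 assms(10,21,22) have distinct: "distinct [u, a, c, v, b, d]"
      by (simp add: disjoint_iff) blast
    show False
    proof (rule best_solution_no_special_triangle_exchange[OF assms(3,6,7) False assms(8,9)])
      show "induced_cycle E (triangle u a c)" "special_triangle EB U (triangle u a c)"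
        using special_clique_triangle[OF assms(1,2,4), of u a c] assms(11,17,18) distinct by auto
      show "induced_cycle E (triangle v b d)" "special_triangle EB U (triangle v b d)"
        using special_clique_triangle[OF assms(1,2,5), of v b d] assms(12,19,20) distinct by auto
      show "fst (triangle u a c) \<inter> fst (triangle v b d) = {}"
        using distinct unfolding triangle_def by auto
      show "fst (triangle u a c) \<union> fst (triangle v b d) \<subseteq> fst D\<^sub>1 \<union> fst D\<^sub>2"
        using in_D\<^sub>1 in_D\<^sub>2 unfolding triangle_def by auto
    qed
  qed
qed

lemma best_solution_no_shared_pair_in_two_cliques:
  assumes "simple_graph V E" "corresponding_planar_bipartite V E VB EB U"
    and "\<C> \<in> best_solutions E EB U k" "special_clique EB U K\<^sub>1" "special_clique EB U K\<^sub>2"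
    and "u \<noteq> v" "u \<in> K\<^sub>1 \<inter> K\<^sub>2" "v \<in> K\<^sub>1 \<inter> K\<^sub>2" "distinct [e\<^sub>1, e\<^sub>2, e\<^sub>3, e\<^sub>4]"
    and "e\<^sub>1 \<in> \<Union>(snd ` {C\<in>\<C>. \<not> special_triangle EB U C}) \<inter> edges_in E K\<^sub>1"
    and "e\<^sub>2 \<in> \<Union>(snd ` {C\<in>\<C>. \<not> special_triangle EB U C}) \<inter> edges_in E K\<^sub>1"
    and "e\<^sub>3 \<in> \<Union>(snd ` {C\<in>\<C>. \<not> special_triangle EB U C}) \<inter> edges_in E K\<^sub>2"
    and "e\<^sub>4 \<in> \<Union>(snd ` {C\<in>\<C>. \<not> special_triangle EB U C}) \<inter> edges_in E K\<^sub>2"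
    and "u \<in> e\<^sub>1" "u \<in> e\<^sub>3" "v \<in> e\<^sub>2" "v \<in> e\<^sub>4"
  shows False
proof -
  have sol: "solution E k \<C>"
    using assms(3) unfolding best_solutions_def induced_solution_def by simp
  have edge_at: "\<exists>D x. D \<in> \<C> \<and> \<not> special_triangle EB U D \<and> e = {w, x} \<and> e \<in> snd D \<and>
      w \<in> fst D \<and> x \<in> K"
    if e: "e \<in> \<Union>(snd ` {C\<in>\<C>. \<not> special_triangle EB U C}) \<inter> edges_in E K" "w \<in> e"
    for e w K
  proof -
    obtain D where D: "D \<in> \<C>" "\<not> special_triangle EB U D" "e \<in> snd D"
      using e(1) by blast
    with sol obtain x y where "e = {x, y}" "x \<in> fst D" "y \<in> fst D"
      unfolding solution_def by (metis is_cycle_edgeE)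
    moreover have "x \<in> K" "y \<in> K"
      using e(1) \<open>e = {x, y}\<close> unfolding edges_in_def by auto
    ultimately show ?thesis
      using D e(2) by (intro exI[of _ D]) (auto simp: insert_commute)
  qed
  obtain D\<^sub>1 a where D\<^sub>1: "D\<^sub>1 \<in> \<C>" "\<not> special_triangle EB U D\<^sub>1" "e\<^sub>1 = {u, a}" "{u, a} \<in> snd D\<^sub>1"
      "u \<in> fst D\<^sub>1" "a \<in> K\<^sub>1"
    using edge_at[OF assms(10,14)] by blast
  obtain D\<^sub>3 b where D\<^sub>3: "D\<^sub>3 \<in> \<C>" "e\<^sub>3 = {u, b}" "{u, b} \<in> snd D\<^sub>3" "u \<in> fst D\<^sub>3" "b \<in> K\<^sub>2"
    using edge_at[OF assms(12,15)] by blast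
  obtain D\<^sub>2 c where D\<^sub>2: "D\<^sub>2 \<in> \<C>" "\<not> special_triangle EB U D\<^sub>2" "e\<^sub>2 = {v, c}" "{v, c} \<in> snd D\<^sub>2"
      "v \<in> fst D\<^sub>2" "c \<in> K\<^sub>1"
    using edge_at[OF assms(11,16)] by blast
  obtain D\<^sub>4 d where D\<^sub>4: "D\<^sub>4 \<in> \<C>" "e\<^sub>4 = {v, d}" "{v, d} \<in> snd D\<^sub>4" "v \<in> fst D\<^sub>4" "d \<in> K\<^sub>2"
    using edge_at[OF assms(13,17)] by blast
  have "D\<^sub>3 = D\<^sub>1" "D\<^sub>4 = D\<^sub>2"
    using sol D\<^sub>1 D\<^sub>2 D\<^sub>3 D\<^sub>4 unfolding solution_def by blast+
  moreover have "a \<noteq> b" "c \<noteq> d"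
    using assms(9) D\<^sub>1 D\<^sub>2 D\<^sub>3 D\<^sub>4 by auto
  ultimately show False
    using best_solution_no_two_edges_in_two_cliques[OF assms(1-5) D\<^sub>1(1) D\<^sub>2(1) D\<^sub>1(2) D\<^sub>2(2)
        assms(6-8) D\<^sub>1(4)] D\<^sub>1 D\<^sub>2 D\<^sub>3 D\<^sub>4
    by auto
qed

theorem lemma41:
  fixes V :: "'a set" and E :: "'a set set" and VB :: "'a set" and EB :: "'a set set"
    and U :: "'a set" and k :: nat and \<C> :: "('a set \<times> 'a set set) set"
    and K1 K2 :: "'a set"
  assumes "simple_graph V E"
    and "corresponding_planar_bipartite V E VB EB U"
    and "k \<ge> 1"
    and "\<C> \<in> best_solutions E EB U k"
    and "special_clique EB U K1" and "special_clique EB U K2"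
  shows "\<not> (\<exists>u v e1 e2 e3 e4.
            u \<noteq> v \<and>
            u \<in> \<Union>(fst ` {C\<in>\<C>. \<not> special_triangle EB U C}) \<inter> K1 \<inter> K2 \<and>
            v \<in> \<Union>(fst ` {C\<in>\<C>. \<not> special_triangle EB U C}) \<inter> K1 \<inter> K2 \<and>
            distinct [e1, e2, e3, e4] \<and>
            e1 \<in> \<Union>(snd ` {C\<in>\<C>. \<not> special_triangle EB U C}) \<inter> edges_in E K1 \<and>
            e2 \<in> \<Union>(snd ` {C\<in>\<C>. \<not> special_triangle EB U C}) \<inter> edges_in E K1 \<and>
            e3 \<in> \<Union>(snd ` {C\<in>\<C>. \<not> special_triangle EB U C}) \<inter> edges_in E K2 \<and>
            e4 \<in> \<Union>(snd ` {C\<in>\<C>. \<not> special_triangle EB U C}) \<inter> edges_in E K2 \<and>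
            u \<in> e1 \<and> u \<in> e3 \<and> v \<in> e2 \<and> v \<in> e4)"
  using best_solution_no_shared_pair_in_two_cliques[OF assms(1,2,4-6)] by blast

end
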